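(* Let $t$ be an indeterminate. For all integers $n\ge1$ and $l\ge1$, $$\sum_{\substack{\lambda:\ |\lambda|=n,\\ \ell(\lambda)=l}} t^{2n(\lambda)}\frac{(t;t)_l}{(t;t)_{m_1(\lambda)}(t;t)_{m_2(\lambda)}\cdots(t;t)_{m_n(\lambda)}}=t^{l(l-1)}\begin{bmatrix}n-1\\ l-1\end{bmatrix}_t .$$
   Context: For a partition $\lambda$: $|\lambda|=\sum_i\lambda_i$, $\ell(\lambda)$ is the number of nonzero parts, $n(\lambda)=\sum_{i\ge1}(i-1)\lambda_i$, and $m_j(\lambda)=\#\{i:\lambda_i=j\}$. $(x;t)_m=\prod_{i=1}^m(1-xt^{i-1})$, $(x;t)_0=1$, and $\begin{bmatrix} a\\ b\end{bmatrix}_t=\frac{(t;t)_a}{(t;t)_b(t;t)_{a-b}}$ for $0\le b\le a$, $0$ otherwise. *)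

theory Defs
  imports Main "HOL-Computational_Algebra.Polynomial" "HOL-Computational_Algebra.Fraction_Field"
begin

definition tvar :: "rat poly fract" where
  "tvar = Fract [:0, 1:] 1"

definition qpoch :: "'a::field \<Rightarrow> 'a \<Rightarrow> nat \<Rightarrow> 'a" where
  "qpoch x t m = (\<Prod>i<m. 1 - x * t ^ i)"

definition qbinom :: "'a::field \<Rightarrow> nat \<Rightarrow> nat \<Rightarrow> 'a" where
  "qbinom t a b = (if b \<le> a then qpoch t t a / (qpoch t t b * qpoch t t (a - b)) else 0)"

definition partitions :: "nat \<Rightarrow> nat list set" where
  "partitions n = {xs. sorted_wrt (\<ge>) xs \<and> 0 \<notin> set xs \<and> sum_list xs = n}"

text \<open>n(lambda) = sum_i (i-1) lambda_i (1-indexed), i.e. sum_i i * lambda!i 0-indexed.\<close>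
definition nfun :: "nat list \<Rightarrow> nat" where
  "nfun xs = (\<Sum>i<length xs. i * xs ! i)"

definition mult :: "nat \<Rightarrow> nat list \<Rightarrow> nat" where
  "mult j xs = count_list xs j"

end

theory Submission
  imports Defs
begin

text \<open>Removing the first column of the Young diagram of a partition lambda of n with l parts
leaves a partition mu of n - l with j <= l parts, and mu together with l determines lambda.
Since n(lambda) = n(mu) + l(l-1)/2, m_1(lambda) = l - j and m_(i+1)(lambda) = m_i(mu), the summand
for lambda is t^(l(l-1)) [l choose j]_t times the summand for mu. Hence the left-hand side S(n, l)
satisfies S(n, l) = t^(l(l-1)) sum_j [l choose j]_t S(n - l, j). By strong induction on n,
S(n - l, j) = t^(j(j-1)) [n-l-1 choose j-1]_t for j >= 1, and the q-Vandermonde identity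
collapses the resulting sum to [n-1 choose l-1]_t.\<close>

lemma qpoch_0 [simp]: "qpoch x t 0 = 1"
  by (simp add: qpoch_def)

lemma qpoch_Suc: "qpoch x t (Suc m) = qpoch x t m * (1 - x * t ^ m)"
  by (simp add: qpoch_def)

lemma qbinom_0: "qpoch q q a \<noteq> 0 \<Longrightarrow> qbinom q a 0 = 1"
  by (simp add: qbinom_def)

lemma qbinom_self: "qpoch q q a \<noteq> 0 \<Longrightarrow> qbinom q a a = 1"
  by (simp add: qbinom_def)

lemma qbinom_eq_0: "a < b \<Longrightarrow> qbinom q a b = 0"
  by (simp add: qbinom_def)

lemma qbinom_symmetric: "b \<le> a \<Longrightarrow> qbinom q a (a - b) = qbinom q a b"
  by (simp add: qbinom_def mult.commute)

lemma qbinom_Suc_Suc: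
  fixes q :: "'a::field"
  assumes nz: "\<And>m. qpoch q q m \<noteq> 0"
  shows "qbinom q (Suc a) (Suc b) = qbinom q a b + q ^ Suc b * qbinom q a (Suc b)"
proof (cases "b < a")
  case True
  then obtain c where a: "a = Suc (b + c)"
    using less_imp_Suc_add by blast
  define x y z u v where "x = qpoch q q b" and "y = qpoch q q c" and "z = qpoch q q a"
    and "u = q ^ Suc b" and "v = q ^ Suc c"
  have "x \<noteq> 0" "y \<noteq> 0"
    using nz by (auto simp: x_def y_def)
  moreover have "1 - u \<noteq> 0" "1 - v \<noteq> 0"
    using nz[of "Suc b"] nz[of "Suc c"] by (auto simp: u_def v_def qpoch_Suc)
  \<comment> \<open>since u v = q^(a+1), 1 - u v is the last factor of (q;q)_(a+1)\<close>
  moreover have "qbinom q (Suc a) (Suc b) = z * (1 - u * v) / (x * (1 - u) * (y * (1 - v)))"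
    by (simp add: qbinom_def x_def y_def z_def u_def v_def a qpoch_Suc power_add mult_ac)
  moreover have "qbinom q a b = z / (x * (y * (1 - v)))"
    by (simp add: qbinom_def x_def y_def z_def v_def a qpoch_Suc)
  moreover have "qbinom q a (Suc b) = z / (x * (1 - u) * y)"
    by (simp add: qbinom_def x_def y_def z_def u_def a qpoch_Suc)
  ultimately show ?thesis
    unfolding u_def[symmetric] by (simp add: divide_simps) algebra
next
  case False
  then show ?thesis
    using nz by (cases "b = a") (simp_all add: qbinom_self qbinom_eq_0)
qed

lemma qbinom_Suc_Suc_weighted:
  fixes q :: "'a::field"
  assumes nz: "\<And>m. qpoch q q m \<noteq> 0"
  shows "qbinom q (Suc m) (Suc b) * q ^ (i * (m - b))
           = qbinom q m b * q ^ (i * (m - b))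
             + q ^ (Suc b + i) * (qbinom q m (Suc b) * q ^ (i * (m - Suc b)))"
proof -
  have "q ^ Suc b * qbinom q m (Suc b) * q ^ (i * (m - b))
          = q ^ (Suc b + i) * (qbinom q m (Suc b) * q ^ (i * (m - Suc b)))"
  proof (cases "b < m")
    case True
    then have "i * (m - b) = i + i * (m - Suc b)"
      by (metis Suc_diff_Suc mult_Suc_right)
    then show ?thesis
      by (simp add: power_add mult_ac)
  qed (simp add: qbinom_eq_0)
  then show ?thesis
    by (simp add: qbinom_Suc_Suc[OF nz] distrib_right)
qed

lemma qbinom_vandermonde:
  fixes q :: "'a::field"
  assumes nz: "\<And>m. qpoch q q m \<noteq> 0"
  shows "qbinom q (m + N) k
           = (\<Sum>i\<le>k. qbinom q m (k - i) * qbinom q N i * q ^ (i * (m + i - k)))"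
proof (induction m arbitrary: k)
  case 0
  have "(\<Sum>i\<le>k. qbinom q 0 (k - i) * qbinom q N i * q ^ (i * (0 + i - k))) = qbinom q N k"
    by (subst sum.remove[of _ k]) (auto simp: qbinom_0 nz qbinom_eq_0 intro!: sum.neutral)
  then show ?case
    by simp
next
  case (Suc m)
  let ?T = "\<lambda>m k i. qbinom q m (k - i) * qbinom q N i * q ^ (i * (m + i - k))"
  show ?case
  proof (cases k)
    case 0
    then show ?thesis
      using nz by (simp add: qbinom_0)
  next
    case k: (Suc k')
    have term_Suc: "?T (Suc m) k i = ?T m k' i + q ^ k * ?T m k i" if "i \<le> k'" for i
    proof -
      define b where "b = k' - i"
      have idx: "k - i = Suc b" "k' - i = b" "Suc m + i - k = m - b" "m + i - k' = m - b"
        "m + i - k = m - Suc b" "k = Suc b + i"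
        using k that by (simp_all add: b_def)
      show ?thesis
        using qbinom_Suc_Suc_weighted[OF nz, of m b i] unfolding idx
        by (simp add: distrib_left distrib_right mult_ac)
    qed
    have term_last: "?T (Suc m) k k = q ^ k * ?T m k k"
      using nz by (simp add: qbinom_0 power_add mult_ac)
    have sum_Suc: "(\<Sum>i\<le>k'. ?T (Suc m) k i)
                     = (\<Sum>i\<le>k'. ?T m k' i) + q ^ k * (\<Sum>i\<le>k'. ?T m k i)"
      unfolding sum_distrib_left sum.distrib[symmetric] by (intro sum.cong refl term_Suc) simp
    have "qbinom q (Suc m + N) k = qbinom q (m + N) k' + q ^ k * qbinom q (m + N) k"
      using qbinom_Suc_Suc[OF nz, of "m + N" k'] k by simp
    also have "\<dots> = (\<Sum>i\<le>k'. ?T m k' i)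
                      + q ^ k * ((\<Sum>i\<le>k'. ?T m k i) + ?T m k k)"
      unfolding Suc.IH k by simp
    also have "\<dots> = (\<Sum>i\<le>k'. ?T (Suc m) k i) + ?T (Suc m) k k"
      unfolding sum_Suc term_last by (simp only: distrib_left add.assoc)
    also have "\<dots> = (\<Sum>i\<le>k. ?T (Suc m) k i)"
      by (simp add: k)
    finally show ?thesis .
  qed
qed

lemma count_list_replicate: "count_list (replicate n x) y = (if x = y then n else 0)"
  by (induction n) auto

lemma length_le_sum_list: "0 \<notin> set xs \<Longrightarrow> length xs \<le> sum_list (xs :: nat list)"
  by (induction xs) auto

lemma partitions_length_le: "lam \<in> partitions n \<Longrightarrow> length lam \<le> n"
  unfolding partitions_def using length_le_sum_list by auto

lemma partitions_part_le: "lam \<in> partitions n \<Longrightarrow> x \<in> set lam \<Longrightarrow> x \<le> n"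
  unfolding partitions_def using member_le_sum_list by fastforce

lemma finite_partitions: "finite (partitions n)"
proof (rule finite_subset)
  show "partitions n \<subseteq> {xs. set xs \<subseteq> {0..n} \<and> length xs \<le> n}"
    using partitions_length_le partitions_part_le by fastforce
  show "finite {xs. set xs \<subseteq> {0..n} \<and> length xs \<le> n}"
    by (rule finite_lists_length_le) simp
qed

lemma sorted_positive_eq_filter_append_ones:
  fixes xs :: "nat list"
  assumes "sorted_wrt (\<ge>) xs" and "0 \<notin> set xs"
  shows "xs = filter ((<) 1) xs @ replicate (count_list xs 1) 1"
  using assms
proof (induction xs)
  case (Cons x xs)
  show ?case
  proof (cases "1 < x")
    case True
    then show ?thesis
      using Cons by simp
  next
    case False
    have ones: "\<forall>y\<in>set (x # xs). y = 1"
    proof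
      fix y
      assume y: "y \<in> set (x # xs)"
      with Cons.prems(1) have "y \<le> x"
        by auto
      moreover from y Cons.prems(2) have "y \<noteq> 0"
        by metis
      ultimately show "y = 1"
        using False by linarith
    qed
    then have filter: "filter ((<) 1) (x # xs) = []"
      and count: "count_list (x # xs) 1 = length (x # xs)"
      by (auto simp: filter_empty_conv count_list_eq_length_filter)
    show ?thesis
      unfolding filter count append_Nil by (rule replicate_length_same[OF ones, symmetric])
  qed
qed simp

definition add_column :: "nat \<Rightarrow> nat list \<Rightarrow> nat list" where
  "add_column l mu = map Suc mu @ replicate (l - length mu) 1"

definition remove_column :: "nat list \<Rightarrow> nat list" where
  "remove_column lam = map (\<lambda>x. x - 1) (filter ((<) 1) lam)"

lemma length_add_column: "length mu \<le> l \<Longrightarrow> length (add_column l mu) = l"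
  by (simp add: add_column_def)

lemma sum_list_add_column:
  "length mu \<le> l \<Longrightarrow> sum_list (add_column l mu) = sum_list mu + l"
  by (simp add: add_column_def sum_list_Suc sum_list_replicate)

lemma sorted_add_column: "sorted_wrt (\<ge>) mu \<Longrightarrow> sorted_wrt (\<ge>) (add_column l mu)"
proof -
  have "sorted_wrt (\<ge>) (replicate k (1 :: nat))" for k
    by (induction k) auto
  then show "sorted_wrt (\<ge>) mu \<Longrightarrow> sorted_wrt (\<ge>) (add_column l mu)"
    by (auto simp: add_column_def sorted_wrt_append sorted_wrt_map)
qed

lemma nfun_add_column:
  assumes "length mu \<le> l"
  shows "2 * nfun (add_column l mu) = 2 * nfun mu + l * (l - 1)"
proof -
  have "nfun (add_column l mu) = (\<Sum>i<l. i + (if i < length mu then i * mu ! i else 0))"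
    unfolding nfun_def length_add_column[OF assms]
    by (intro sum.cong) (auto simp: add_column_def nth_append)
  also have "\<dots> = (\<Sum>i<l. i) + nfun mu"
  proof -
    have "{..<l} \<inter> {i. i < length mu} = {..<length mu}"
      using assms by auto
    then show ?thesis
      by (simp add: sum.distrib nfun_def sum.If_cases)
  qed
  moreover have "2 * (\<Sum>i<l. i) = l * (l - 1)"
    by (induction l) (auto simp: algebra_simps)
  ultimately show ?thesis
    by simp
qed

lemma mult_1_add_column: "0 \<notin> set mu \<Longrightarrow> mult 1 (add_column l mu) = l - length mu"
  by (auto simp: mult_def add_column_def count_list_replicate count_list_0_iff)

lemma mult_Suc_add_column: "0 < i \<Longrightarrow> mult (Suc i) (add_column l mu) = mult i mu"
  by (simp add: mult_def add_column_def count_list_replicate count_list_map_conv)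

lemma remove_add_column: "0 \<notin> set mu \<Longrightarrow> remove_column (add_column l mu) = mu"
  by (induction mu) (auto simp: remove_column_def add_column_def)

lemma add_remove_column:
  assumes "sorted_wrt (\<ge>) lam" and "0 \<notin> set lam"
  shows "add_column (length lam) (remove_column lam) = lam"
proof -
  have "map Suc (remove_column lam) = filter ((<) 1) lam"
    by (induction lam) (auto simp: remove_column_def)
  moreover have "length lam - length (remove_column lam) = count_list lam 1"
    using arg_cong[OF sorted_positive_eq_filter_append_ones[OF assms], of length]
    by (simp add: remove_column_def)
  ultimately show ?thesis
    using sorted_positive_eq_filter_append_ones[OF assms] by (simp add: add_column_def)
qed

lemma bij_betw_add_column:
  "bij_betw (add_column l) {mu \<in> partitions M. length mu \<le> l}
     {lam \<in> partitions (M + l). length lam = l}"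
  (is "bij_betw _ ?A ?B")
proof (rule bij_betw_byWitness[where f' = remove_column])
  show "\<forall>mu\<in>?A. remove_column (add_column l mu) = mu"
    by (simp add: partitions_def remove_add_column)
  show "\<forall>lam\<in>?B. add_column l (remove_column lam) = lam"
    by (auto simp: partitions_def add_remove_column)
  show "add_column l ` ?A \<subseteq> ?B"
  proof (rule image_subsetI)
    fix mu
    assume "mu \<in> ?A"
    moreover have "0 \<notin> set (add_column l mu)"
      by (simp add: add_column_def)
    ultimately show "add_column l mu \<in> ?B"
      by (auto simp: partitions_def sorted_add_column length_add_column sum_list_add_column)
  qed
  show "remove_column ` ?B \<subseteq> ?A"
  proof (rule image_subsetI)
    fix lam
    assume lam: "lam \<in> ?B"
    then have sorted: "sorted_wrt (\<ge>) lam" and pos: "0 \<notin> set lam"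
      by (auto simp: partitions_def)
    have len: "length (remove_column lam) \<le> l"
      using lam length_filter_le[of _ lam] by (simp add: remove_column_def)
    have "sum_list (remove_column lam) + l = M + l"
      using lam add_remove_column[OF sorted pos] sum_list_add_column[OF len]
      by (auto simp: partitions_def)
    moreover have "sorted_wrt (\<ge>) (remove_column lam)"
      unfolding remove_column_def sorted_wrt_map
      by (rule sorted_wrt_mono_rel[OF _ sorted_wrt_filter[OF sorted]]) auto
    ultimately show "remove_column lam \<in> ?A"
      using len by (auto simp: partitions_def remove_column_def)
  qed
qed

lemma prod_qpoch_mult_partitions:
  assumes "lam \<in> partitions n" and "n \<le> N"
  shows "(\<Prod>j\<in>{1..N}. qpoch q q (mult j lam)) = (\<Prod>j\<in>{1..n}. qpoch q q (mult j lam))"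
proof (rule prod.mono_neutral_right)
  show "\<forall>j\<in>{1..N} - {1..n}. qpoch q q (mult j lam) = 1"
    using partitions_part_le[OF assms(1)] by (force simp: mult_def)
qed (use assms(2) in auto)

lemma prod_qpoch_mult_add_column:
  assumes mu: "mu \<in> partitions M" and "length mu \<le> l" and "0 < l"
  shows "(\<Prod>j\<in>{1..M + l}. qpoch q q (mult j (add_column l mu)))
           = qpoch q q (l - length mu) * (\<Prod>j\<in>{1..M}. qpoch q q (mult j mu))"
proof -
  have pos: "0 \<notin> set mu"
    using mu by (simp add: partitions_def)
  let ?f = "\<lambda>j. qpoch q q (mult j (add_column l mu))"
  obtain n where n: "M + l = Suc n"
    using \<open>0 < l\<close> by (metis add_gr_0 gr0_implies_Suc)
  then have "M \<le> n"
    using \<open>0 < l\<close> by simp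
  have "(\<Prod>j\<in>{1..M + l}. ?f j) = ?f 1 * (\<Prod>j\<in>{1..n}. ?f (Suc j))"
    using prod.atLeast_Suc_atMost[of 1 "Suc n" ?f] prod.shift_bounds_cl_Suc_ivl[of ?f 1 n]
    unfolding n by simp
  also have "\<dots> = qpoch q q (l - length mu) * (\<Prod>j\<in>{1..n}. qpoch q q (mult j mu))"
    unfolding mult_1_add_column[OF pos] by (simp add: mult_Suc_add_column)
  also have "\<dots> = qpoch q q (l - length mu) * (\<Prod>j\<in>{1..M}. qpoch q q (mult j mu))"
    by (simp only: prod_qpoch_mult_partitions[OF mu \<open>M \<le> n\<close>])
  finally show ?thesis .
qed

definition partition_qsum :: "'a::field \<Rightarrow> nat \<Rightarrow> nat \<Rightarrow> 'a" where
  "partition_qsum q n l = (\<Sum>lam\<in>{lam \<in> partitions n. length lam = l}.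
      q ^ (2 * nfun lam) * qpoch q q l / (\<Prod>j\<in>{1..n}. qpoch q q (mult j lam)))"

lemma add_column_summand:
  fixes q :: "'a::field"
  assumes nz: "\<And>m. qpoch q q m \<noteq> 0"
    and mu: "mu \<in> partitions M" and "length mu \<le> l" and "0 < l"
  shows "q ^ (2 * nfun (add_column l mu)) * qpoch q q l
           / (\<Prod>j\<in>{1..M + l}. qpoch q q (mult j (add_column l mu)))
         = q ^ (l * (l - 1)) * qbinom q l (length mu)
           * (q ^ (2 * nfun mu) * qpoch q q (length mu)
              / (\<Prod>j\<in>{1..M}. qpoch q q (mult j mu)))"
proof -
  have "(\<Prod>j\<in>{1..M}. qpoch q q (mult j mu)) \<noteq> 0"
    using nz by (simp add: prod_zero_iff)
  with nz[of "length mu"] nz[of "l - length mu"] \<open>length mu \<le> l\<close> show ?thesis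
    unfolding prod_qpoch_mult_add_column[OF mu assms(3,4)] qbinom_def
    by (simp add: nfun_add_column power_add)
qed

lemma partition_qsum_add_column:
  fixes q :: "'a::field"
  assumes nz: "\<And>m. qpoch q q m \<noteq> 0" and "0 < l"
  shows "partition_qsum q (M + l) l
           = q ^ (l * (l - 1)) * (\<Sum>j\<le>l. qbinom q l j * partition_qsum q M j)"
proof -
  let ?A = "{mu \<in> partitions M. length mu \<le> l}"
  let ?c = "q ^ (l * (l - 1))"
  let ?w = "\<lambda>mu. q ^ (2 * nfun mu) * qpoch q q (length mu)
                   / (\<Prod>j\<in>{1..M}. qpoch q q (mult j mu))"
  have "partition_qsum q (M + l) l = (\<Sum>mu\<in>?A. ?c * qbinom q l (length mu) * ?w mu)"
    unfolding partition_qsum_def sum.reindex_bij_betw[OF bij_betw_add_column, symmetric]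
    using add_column_summand[OF nz _ _ \<open>0 < l\<close>] by (intro sum.cong) auto
  also have "\<dots> = (\<Sum>j\<le>l. \<Sum>mu\<in>{mu \<in> ?A. length mu = j}.
                      ?c * qbinom q l (length mu) * ?w mu)"
    by (rule sum.group[symmetric]) (auto simp: finite_partitions)
  also have "\<dots> = (\<Sum>j\<le>l. ?c * (qbinom q l j * partition_qsum q M j))"
  proof (rule sum.cong)
    fix j
    assume "j \<in> {..l}"
    then have "{mu \<in> ?A. length mu = j} = {mu \<in> partitions M. length mu = j}"
      by auto
    then show "(\<Sum>mu\<in>{mu \<in> ?A. length mu = j}. ?c * qbinom q l (length mu) * ?w mu)
                 = ?c * (qbinom q l j * partition_qsum q M j)"
      by (simp add: partition_qsum_def sum_distrib_left mult.assoc)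
  qed simp
  finally show ?thesis
    by (simp add: sum_distrib_left)
qed

lemma partition_qsum_eq_0_if_less:
  assumes "n < l"
  shows "partition_qsum q n l = 0"
proof -
  have "{lam \<in> partitions n. length lam = l} = {}"
    using partitions_length_le assms by fastforce
  then show ?thesis
    unfolding partition_qsum_def by (simp only: sum.empty)
qed

lemma partition_qsum_0_right: "0 < n \<Longrightarrow> partition_qsum q n 0 = 0"
  unfolding partition_qsum_def by (auto simp: partitions_def intro!: sum.neutral)

lemma partition_qsum_0_0: "partition_qsum q 0 0 = 1"
proof -
  have "{lam \<in> partitions 0. length lam = 0} = {[]}"
    by (auto simp: partitions_def)
  then show ?thesis
    by (simp add: partition_qsum_def nfun_def)
qed

lemma sum_qbinom_partition_qsum_0:
  fixes q :: "'a::field"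
  assumes nz: "\<And>m. qpoch q q m \<noteq> 0"
  shows "(\<Sum>j\<le>l. qbinom q l j * partition_qsum q 0 j) = 1"
proof -
  have "(\<Sum>j\<le>l. qbinom q l j * partition_qsum q 0 j) = (\<Sum>j\<le>l. if j = 0 then 1 else 0)"
    using nz
    by (intro sum.cong) (auto simp: partition_qsum_0_0 partition_qsum_eq_0_if_less qbinom_0)
  then show ?thesis
    by simp
qed

lemma qbinom_sum_Suc_shifted:
  fixes q :: "'a::field"
  assumes nz: "\<And>m. qpoch q q m \<noteq> 0"
  shows "(\<Sum>i\<le>L. qbinom q (Suc L) (Suc i) * (q ^ (Suc i * i) * qbinom q N i))
           = qbinom q (Suc L + N) L"
proof -
  have "(\<Sum>i\<le>L. qbinom q (Suc L) (Suc i) * (q ^ (Suc i * i) * qbinom q N i))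
          = (\<Sum>i\<le>L. qbinom q (Suc L) (L - i) * qbinom q N i * q ^ (i * (Suc L + i - L)))"
  proof (rule sum.cong)
    fix i
    assume "i \<in> {..L}"
    then have "qbinom q (Suc L) (L - i) = qbinom q (Suc L) (Suc i)" and "Suc L + i - L = Suc i"
      using qbinom_symmetric[of "Suc i" "Suc L" q] by auto
    then show "qbinom q (Suc L) (Suc i) * (q ^ (Suc i * i) * qbinom q N i)
                 = qbinom q (Suc L) (L - i) * qbinom q N i * q ^ (i * (Suc L + i - L))"
      by (simp add: mult_ac)
  qed simp
  also have "\<dots> = qbinom q (Suc L + N) L"
    by (rule qbinom_vandermonde[OF nz, symmetric])
  finally show ?thesis .
qed

theorem partition_qsum_closed_form:
  fixes q :: "'a::field"
  assumes nz: "\<And>m. qpoch q q m \<noteq> 0" and "1 \<le> n" and "1 \<le> l"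
  shows "partition_qsum q n l = q ^ (l * (l - 1)) * qbinom q (n - 1) (l - 1)"
  using assms(2,3)
proof (induction n arbitrary: l rule: less_induct)
  case (less n)
  show ?case
  proof (cases "l \<le> n")
    case False
    then show ?thesis
      using less.prems by (simp add: partition_qsum_eq_0_if_less qbinom_eq_0)
  next
    case True
    define M where "M = n - l"
    obtain L where L: "l = Suc L"
      using less.prems(2) by (cases l) auto
    have n: "n = M + l"
      using True by (simp add: M_def)
    have "partition_qsum q n l
            = q ^ (l * (l - 1)) * (\<Sum>j\<le>l. qbinom q l j * partition_qsum q M j)"
      unfolding n using less.prems by (intro partition_qsum_add_column[OF nz]) simp
    also have "(\<Sum>j\<le>l. qbinom q l j * partition_qsum q M j) = qbinom q (n - 1) L"
    proof (cases "M = 0")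
      case True
      then show ?thesis
        using sum_qbinom_partition_qsum_0[OF nz, of l] nz by (simp add: n L qbinom_self)
    next
      case False
      have IH: "partition_qsum q M (Suc i) = q ^ (Suc i * i) * qbinom q (M - 1) i" for i
        using less.IH[of M "Suc i"] False less.prems(2) n by simp
      have "(\<Sum>j\<le>l. qbinom q l j * partition_qsum q M j)
              = (\<Sum>i\<le>L. qbinom q (Suc L) (Suc i) * (q ^ (Suc i * i) * qbinom q (M - 1) i))"
        unfolding L sum.atMost_Suc_shift using False by (simp add: partition_qsum_0_right IH)
      also have "\<dots> = qbinom q (n - 1) L"
        using qbinom_sum_Suc_shifted[OF nz, of L "M - 1"] False by (simp add: L n add.commute)
      finally show ?thesis .
    qed
    finally show ?thesis
      by (simp add: L)
  qed
qed

lemma tvar_power: "tvar ^ k = Fract ([:0, 1:] ^ k) 1"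
  by (induction k) (simp_all add: tvar_def One_fract_def)

lemma qpoch_tvar_nonzero: "qpoch tvar tvar m \<noteq> 0"
proof -
  have "tvar ^ Suc i \<noteq> 1" for i
  proof
    assume "tvar ^ Suc i = 1"
    then have "Fract ([:0, 1:] ^ Suc i) 1 = Fract (1 :: rat poly) 1"
      unfolding tvar_power One_fract_def .
    then have "[:0, 1:] ^ Suc i = (1 :: rat poly)"
      by (simp add: eq_fract)
    then have "degree ([:0, 1 :: rat:] ^ Suc i) = 0"
      by simp
    then show False
      by (simp add: degree_power_eq)
  qed
  then show ?thesis
    by (simp add: qpoch_def)
qed

theorem mainTheorem9:
  fixes n l :: nat
  assumes "n \<ge> 1" and "l \<ge> 1"
  shows "(\<Sum>lam\<in>{lam \<in> partitions n. length lam = l}.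
            tvar ^ (2 * nfun lam) * qpoch tvar tvar l
              / (\<Prod>j\<in>{1..n}. qpoch tvar tvar (mult j lam)))
         = tvar ^ (l * (l - 1)) * qbinom tvar (n - 1) (l - 1)"
  using partition_qsum_closed_form[OF qpoch_tvar_nonzero assms] unfolding partition_qsum_def .

end
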